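(* For every group $G$, let $\epsilon\colon\mathrm{Gr}(\mathrm{Pq}(G))\to G$ be the surjective group homomorphism with $\epsilon(\sigma(a))=a$ for all $a\in G$. Then the kernel of $\epsilon$ is contained in the center of $\mathrm{Gr}(\mathrm{Pq}(G))$; in particular $\mathrm{Gr}(\mathrm{Pq}(G))$ is a central extension of $G$ with abelian kernel.
   Context: For a group $G$, $\mathrm{Pq}(G)$ is the power quandle on the underlying set of $G$ with $a\rhd b=aba^{-1}$, $\pi^n(a)=a^n$ ($n\in\mathbb{Z}$), and unit the identity $e$. For a power quandle $P$ (a set with operation $\rhd$, maps $\pi^n$, unit $e$), $\mathrm{Gr}(P)$ is the group with generators $\sigma(a)$, $a\in P$, and relations $\sigma(a\rhd b)=\sigma(a)\sigma(b)\sigma(a)^{-1}$, $\sigma(\pi^n(a))=\sigma(a)^n$, $\sigma(e)=1$ for all $a,b\in P$, $n\in\mathbb{Z}$. Thus $\mathrm{Gr}(\mathrm{Pq}(G))$ has generators $\sigma(a)$, $a\in G$, with relations $\sigma(aba^{-1})=\sigma(a)\sigma(b)\sigma(a)^{-1}$, $\sigma(a^n)=\sigma(a)^n$, $\sigma(e)=1$. *)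

theory Defs
  imports "HOL-Algebra.Algebra"
begin

text \<open>Words in the generators sigma(a) of Gr(Pq(G)): a letter (a, True) stands for
  sigma(a), a letter (a, False) for sigma(a)^-1.\<close>

type_synonym 'a grword = "('a \<times> bool) list"

definition sig_pow :: "'a \<Rightarrow> int \<Rightarrow> 'a grword" where
  "sig_pow a n = replicate (nat \<bar>n\<bar>) (a, n \<ge> 0)"

inductive gr_eq :: "('a, 'm) monoid_scheme \<Rightarrow> 'a grword \<Rightarrow> 'a grword \<Rightarrow> bool"
  for G where
  refl: "gr_eq G xs xs"
| sym: "gr_eq G xs ys \<Longrightarrow> gr_eq G ys xs"
| trans: "gr_eq G xs ys \<Longrightarrow> gr_eq G ys zs \<Longrightarrow> gr_eq G xs zs"
| ctxt: "gr_eq G xs ys \<Longrightarrow> gr_eq G (us @ xs @ vs) (us @ ys @ vs)"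
| cancel: "gr_eq G [(a, b), (a, \<not> b)] []"
| conj: "a \<in> carrier G \<Longrightarrow> b \<in> carrier G \<Longrightarrow>
    gr_eq G [(a \<otimes>\<^bsub>G\<^esub> b \<otimes>\<^bsub>G\<^esub> inv\<^bsub>G\<^esub> a, True)] [(a, True), (b, True), (a, False)]"
| power: "a \<in> carrier G \<Longrightarrow> gr_eq G [(a [^]\<^bsub>G\<^esub> (n::int), True)] (sig_pow a n)"
| unit: "gr_eq G [(\<one>\<^bsub>G\<^esub>, True)] []"

definition gr_words :: "('a, 'm) monoid_scheme \<Rightarrow> 'a grword set" where
  "gr_words G = {xs. set (map fst xs) \<subseteq> carrier G}"

definition gr_class :: "('a, 'm) monoid_scheme \<Rightarrow> 'a grword \<Rightarrow> 'a grword set" where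
  "gr_class G xs = {ys \<in> gr_words G. gr_eq G xs ys}"

definition GrPq :: "('a, 'm) monoid_scheme \<Rightarrow> 'a grword set monoid" where
  "GrPq G = \<lparr> carrier = gr_class G ` gr_words G,
             monoid.mult = (\<lambda>A B. gr_class G ((SOME xs. xs \<in> A) @ (SOME ys. ys \<in> B))),
             one = gr_class G [] \<rparr>"

definition sigma :: "('a, 'm) monoid_scheme \<Rightarrow> 'a \<Rightarrow> 'a grword set" where
  "sigma G a = gr_class G [(a, True)]"

definition center :: "('a, 'm) monoid_scheme \<Rightarrow> 'a set" where
  "center H = {z \<in> carrier H. \<forall>x \<in> carrier H. z \<otimes>\<^bsub>H\<^esub> x = x \<otimes>\<^bsub>H\<^esub> z}"

end

theory Submission
  imports Defs
begin

text \<open>Conjugating a generator by a word w multiplies out, one letter at a time, to the generator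
  of the conjugate of b by the value of w in G, because each letter is equivalent to a single
  generator and the conjugation relation applies to it. Hence a word of value 1 commutes with
  every generator, and so with every element of Gr(Pq(G)).\<close>

text \<open>The carrier guard makes word values invariant under the cancellation relation, which
  holds for arbitrary letters.\<close>

definition letter_val :: "('a, 'm) monoid_scheme \<Rightarrow> 'a \<times> bool \<Rightarrow> 'a" where
  "letter_val G x =
    (if fst x \<in> carrier G then (if snd x then fst x else inv\<^bsub>G\<^esub> fst x) else \<one>\<^bsub>G\<^esub>)"

definition word_val :: "('a, 'm) monoid_scheme \<Rightarrow> 'a grword \<Rightarrow> 'a" where
  "word_val G w = foldr (\<lambda>x g. letter_val G x \<otimes>\<^bsub>G\<^esub> g) w \<one>\<^bsub>G\<^esub>"

definition word_inv :: "'a grword \<Rightarrow> 'a grword" where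
  "word_inv w = rev (map (\<lambda>(a, b). (a, \<not> b)) w)"

lemma word_inv_simps [simp]:
  "word_inv [] = []"
  "word_inv (x # w) = word_inv w @ [(fst x, \<not> snd x)]"
  "word_inv (w @ v) = word_inv v @ word_inv w"
  "word_inv (word_inv w) = w"
  by (auto simp: word_inv_def rev_map[symmetric] comp_def case_prod_beta)

lemma gr_words_Nil [simp]: "[] \<in> gr_words G"
  by (simp add: gr_words_def)

lemma gr_words_Cons [simp]: "x # w \<in> gr_words G \<longleftrightarrow> fst x \<in> carrier G \<and> w \<in> gr_words G"
  by (simp add: gr_words_def)

lemma gr_words_append [simp]: "w @ v \<in> gr_words G \<longleftrightarrow> w \<in> gr_words G \<and> v \<in> gr_words G"
  by (auto simp: gr_words_def)

lemma gr_words_word_inv [simp]: "word_inv w \<in> gr_words G \<longleftrightarrow> w \<in> gr_words G"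
  by (induction w) auto

lemmas [trans] = gr_eq.trans

lemma gr_eq_append: "gr_eq G w w' \<Longrightarrow> gr_eq G v v' \<Longrightarrow> gr_eq G (w @ v) (w' @ v')"
  using gr_eq.ctxt[of G w w' "[]" v] gr_eq.ctxt[of G v v' w' "[]"] gr_eq.trans by fastforce

lemma gr_eq_cancel_letter: "gr_eq G [x, (fst x, \<not> snd x)] []"
  using gr_eq.cancel[of G "fst x" "snd x"] by simp

lemma gr_eq_append_word_inv: "gr_eq G (w @ word_inv w) []"
proof (induction w)
  case Nil
  show ?case by (simp add: gr_eq.refl)
next
  case (Cons x w)
  have "gr_eq G ([x] @ (w @ word_inv w) @ [(fst x, \<not> snd x)]) ([x] @ [] @ [(fst x, \<not> snd x)])"
    using Cons.IH by (rule gr_eq.ctxt)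
  then show ?case
    using gr_eq_cancel_letter[of G x] gr_eq.trans by fastforce
qed

lemma gr_eq_word_inv_append: "gr_eq G (word_inv w @ w) []"
  using gr_eq_append_word_inv[of G "word_inv w"] by simp

lemma gr_eq_letter_inverse:
  assumes "gr_eq G [x] [y]"
  shows "gr_eq G [(fst x, \<not> snd x)] [(fst y, \<not> snd y)]"
proof -
  let ?x = "(fst x, \<not> snd x)" and ?y = "(fst y, \<not> snd y)"
  have "gr_eq G [?x] ([?x] @ [y, ?y] @ [])"
    using gr_eq.sym[OF gr_eq.ctxt[OF gr_eq_cancel_letter[of G y], of "[?x]" "[]"]] by simp
  also have "gr_eq G \<dots> ([?x] @ [x] @ [?y])"
    using gr_eq.ctxt[OF gr_eq.sym[OF assms], of "[?x]" "[?y]"] by simp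
  also have "gr_eq G \<dots> ([] @ [] @ [?y])"
    using gr_eq.ctxt[OF gr_eq_cancel_letter[of G ?x], of "[]" "[?y]"] by simp
  finally show ?thesis by simp
qed

context group
begin

lemma letter_val_closed [simp]: "letter_val G x \<in> carrier G"
  by (auto simp: letter_val_def)

lemma letter_val_True [simp]: "a \<in> carrier G \<Longrightarrow> letter_val G (a, True) = a"
  by (simp add: letter_val_def)

lemma letter_val_False [simp]: "a \<in> carrier G \<Longrightarrow> letter_val G (a, False) = inv a"
  by (simp add: letter_val_def)

lemma word_val_Nil [simp]: "word_val G [] = \<one>"
  and word_val_Cons [simp]: "word_val G (x # w) = letter_val G x \<otimes> word_val G w"
  by (simp_all add: word_val_def)

lemma word_val_closed [simp]: "word_val G w \<in> carrier G"
  by (induction w) simp_all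

lemma word_val_append [simp]: "word_val G (w @ v) = word_val G w \<otimes> word_val G v"
  by (induction w) (simp_all add: m_assoc)

lemma word_val_replicate: "word_val G (replicate k x) = letter_val G x [^] k"
  by (induction k) (simp_all add: nat_pow_mult nat_pow_Suc2[symmetric] del: nat_pow_Suc2)

lemma word_val_sig_pow:
  assumes "a \<in> carrier G"
  shows "word_val G (sig_pow a n) = a [^] n"
proof (cases "n \<ge> 0")
  case True
  then have "word_val G (sig_pow a n) = a [^] nat n"
    using assms by (simp add: sig_pow_def word_val_replicate)
  also have "\<dots> = a [^] n"
    using True by (metis int_pow_int int_nat_eq)
  finally show ?thesis .
next
  case False
  then have "word_val G (sig_pow a n) = inv a [^] nat (- n)"
    using assms by (simp add: sig_pow_def word_val_replicate)
  also have "\<dots> = a [^] n"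
    using False assms by (metis int_pow_neg_int nat_pow_inv int_nat_eq minus_minus neg_0_le_iff_le
        nle_le)
  finally show ?thesis .
qed

lemma word_val_gr_eq: "gr_eq G w v \<Longrightarrow> word_val G w = word_val G v"
proof (induction rule: gr_eq.induct)
  case (cancel a b)
  then show ?case by (cases b) (simp_all add: letter_val_def)
next
  case (conj a b)
  then show ?case by (simp add: letter_val_def m_assoc)
next
  case (power a n)
  then show ?case by (simp add: word_val_sig_pow letter_val_def int_pow_closed)
next
  case unit
  then show ?case by (simp add: letter_val_def)
qed simp_all

lemma gr_eq_inv_generator: "a \<in> carrier G \<Longrightarrow> gr_eq G [(inv a, True)] [(a, False)]"
  using gr_eq.power[of a G "-1"] by (simp add: sig_pow_def int_pow_neg)

lemma gr_eq_letter_generator: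
  assumes "fst x \<in> carrier G"
  shows "gr_eq G [x] [(letter_val G x, True)]"
  using assms gr_eq.sym[OF gr_eq_inv_generator[of "fst x"]] gr_eq.refl
  by (cases x; cases "snd x") auto

lemma gr_eq_conj_generator:
  assumes "w \<in> gr_words G" "b \<in> carrier G"
  shows "gr_eq G (w @ [(b, True)] @ word_inv w)
    [(word_val G w \<otimes> b \<otimes> inv (word_val G w), True)]"
  using assms(1)
proof (induction w)
  case Nil
  show ?case using assms(2) by (simp add: gr_eq.refl)
next
  case (Cons x w)
  let ?l = "letter_val G x" and ?c = "word_val G w \<otimes> b \<otimes> inv (word_val G w)"
  have x: "fst x \<in> carrier G" and w: "w \<in> gr_words G"
    using Cons.prems by simp_all
  have "gr_eq G ([x] @ (w @ [(b, True)] @ word_inv w) @ [(fst x, \<not> snd x)])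
      ([(?l, True)] @ [(?c, True)] @ [(?l, False)])"
    using gr_eq_append[OF gr_eq_letter_generator[OF x] gr_eq_append[OF Cons.IH[OF w]
          gr_eq_letter_inverse[OF gr_eq_letter_generator[OF x]]]]
    by simp
  also have "gr_eq G \<dots> [(?l \<otimes> ?c \<otimes> inv ?l, True)]"
    using gr_eq.sym[OF gr_eq.conj[of ?l G ?c]] assms(2) by simp
  also have "?l \<otimes> ?c \<otimes> inv ?l = word_val G (x # w) \<otimes> b \<otimes> inv (word_val G (x # w))"
    using assms(2) by (simp add: inv_mult_group m_assoc)
  finally show ?case by simp
qed

lemma gr_eq_conj_kernel_letter:
  assumes "w \<in> gr_words G" "word_val G w = \<one>" "fst x \<in> carrier G"
  shows "gr_eq G (w @ [x] @ word_inv w) [x]"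
proof -
  have "gr_eq G (w @ [x] @ word_inv w) (w @ [(letter_val G x, True)] @ word_inv w)"
    using gr_eq.ctxt[OF gr_eq_letter_generator[OF assms(3)]] by simp
  also have "gr_eq G \<dots> [(letter_val G x, True)]"
    using gr_eq_conj_generator[OF assms(1)] assms(2) by simp
  also have "gr_eq G \<dots> [x]"
    using gr_eq.sym[OF gr_eq_letter_generator[OF assms(3)]] .
  finally show ?thesis .
qed

lemma gr_eq_conj_kernel:
  assumes "w \<in> gr_words G" "word_val G w = \<one>" "v \<in> gr_words G"
  shows "gr_eq G (w @ v @ word_inv w) v"
  using assms(3)
proof (induction v)
  case Nil
  show ?case by (simp add: gr_eq_append_word_inv)
next
  case (Cons x v)
  have "gr_eq G (w @ (x # v) @ word_inv w) ((w @ [x]) @ (word_inv w @ w) @ (v @ word_inv w))"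
    using gr_eq.ctxt[OF gr_eq.sym[OF gr_eq_word_inv_append[of G w]], of "w @ [x]" "v @ word_inv w"]
    by simp
  also have "gr_eq G \<dots> ([x] @ v)"
    using gr_eq_append[OF gr_eq_conj_kernel_letter[OF assms(1,2)] Cons.IH] Cons.prems by simp
  finally show ?case by simp
qed

lemma gr_eq_kernel_commute:
  assumes "w \<in> gr_words G" "word_val G w = \<one>" "v \<in> gr_words G"
  shows "gr_eq G (w @ v) (v @ w)"
proof -
  have "gr_eq G (w @ v) ((w @ v @ word_inv w) @ w)"
    using gr_eq_append[OF gr_eq.refl gr_eq.sym[OF gr_eq_word_inv_append[of G w]], of "w @ v"]
    by simp
  also have "gr_eq G \<dots> (v @ w)"
    using gr_eq_append[OF gr_eq_conj_kernel[OF assms] gr_eq.refl] .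
  finally show ?thesis .
qed

end

lemma gr_class_eq: "gr_eq G w v \<Longrightarrow> gr_class G w = gr_class G v"
  unfolding gr_class_def using gr_eq.trans gr_eq.sym by blast

lemma gr_eq_some_gr_class:
  assumes "w \<in> gr_words G"
  shows "gr_eq G w (SOME v. v \<in> gr_class G w) \<and> (SOME v. v \<in> gr_class G w) \<in> gr_words G"
proof -
  have "w \<in> gr_class G w"
    using assms by (simp add: gr_class_def gr_eq.refl)
  then have "(SOME v. v \<in> gr_class G w) \<in> gr_class G w"
    by (rule someI)
  then show ?thesis by (simp add: gr_class_def)
qed

lemma carrier_GrPq: "A \<in> carrier (GrPq G) \<longleftrightarrow> (\<exists>w \<in> gr_words G. A = gr_class G w)"
  by (auto simp: GrPq_def)

lemma gr_class_in_carrier_GrPq: "w \<in> gr_words G \<Longrightarrow> gr_class G w \<in> carrier (GrPq G)"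
  by (auto simp: GrPq_def)

lemma one_GrPq: "\<one>\<^bsub>GrPq G\<^esub> = gr_class G []"
  by (simp add: GrPq_def)

lemma mult_GrPq_gr_class:
  assumes "w \<in> gr_words G" "v \<in> gr_words G"
  shows "gr_class G w \<otimes>\<^bsub>GrPq G\<^esub> gr_class G v = gr_class G (w @ v)"
proof -
  have "gr_eq G (w @ v) ((SOME u. u \<in> gr_class G w) @ (SOME u. u \<in> gr_class G v))"
    using gr_eq_append gr_eq_some_gr_class[OF assms(1)] gr_eq_some_gr_class[OF assms(2)] by blast
  then show ?thesis
    unfolding GrPq_def using gr_class_eq by fastforce
qed

lemma group_GrPq: "group (GrPq G)"
proof (rule groupI)
  fix A B assume "A \<in> carrier (GrPq G)" "B \<in> carrier (GrPq G)"
  then obtain u v where "u \<in> gr_words G" "v \<in> gr_words G" "A = gr_class G u" "B = gr_class G v"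
    unfolding carrier_GrPq by blast
  then show "A \<otimes>\<^bsub>GrPq G\<^esub> B \<in> carrier (GrPq G)"
    unfolding carrier_GrPq using mult_GrPq_gr_class gr_words_append by blast
next
  fix A B C assume "A \<in> carrier (GrPq G)" "B \<in> carrier (GrPq G)" "C \<in> carrier (GrPq G)"
  then obtain u v w where "u \<in> gr_words G" "v \<in> gr_words G" "w \<in> gr_words G"
    and "A = gr_class G u" "B = gr_class G v" "C = gr_class G w"
    unfolding carrier_GrPq by blast
  then show "A \<otimes>\<^bsub>GrPq G\<^esub> B \<otimes>\<^bsub>GrPq G\<^esub> C = A \<otimes>\<^bsub>GrPq G\<^esub> (B \<otimes>\<^bsub>GrPq G\<^esub> C)"
    using mult_GrPq_gr_class gr_words_append by (metis append_assoc)
next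
  show "\<one>\<^bsub>GrPq G\<^esub> \<in> carrier (GrPq G)"
    unfolding carrier_GrPq one_GrPq using gr_words_Nil by blast
next
  fix A assume "A \<in> carrier (GrPq G)"
  then obtain w where w: "w \<in> gr_words G" "A = gr_class G w"
    unfolding carrier_GrPq by blast
  then show "\<one>\<^bsub>GrPq G\<^esub> \<otimes>\<^bsub>GrPq G\<^esub> A = A"
    using mult_GrPq_gr_class[OF gr_words_Nil w(1)] by (simp add: one_GrPq)
  have "gr_class G (word_inv w) \<otimes>\<^bsub>GrPq G\<^esub> A = \<one>\<^bsub>GrPq G\<^esub>"
    using w mult_GrPq_gr_class[of "word_inv w" G w] gr_class_eq[OF gr_eq_word_inv_append[of G w]]
    by (simp add: one_GrPq)
  moreover have "gr_class G (word_inv w) \<in> carrier (GrPq G)"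
    using w carrier_GrPq gr_words_word_inv by blast
  ultimately show "\<exists>B \<in> carrier (GrPq G). B \<otimes>\<^bsub>GrPq G\<^esub> A = \<one>\<^bsub>GrPq G\<^esub>"
    by blast
qed

lemma sigma_in_carrier_GrPq: "a \<in> carrier G \<Longrightarrow> sigma G a \<in> carrier (GrPq G)"
  unfolding carrier_GrPq sigma_def by (rule bexI[of _ "[(a, True)]"]) simp_all

definition GrPq_eval :: "('a, 'm) monoid_scheme \<Rightarrow> 'a grword set \<Rightarrow> 'a" where
  "GrPq_eval G A = word_val G (SOME w. w \<in> A)"

context group
begin

lemma GrPq_eval_gr_class: "w \<in> gr_words G \<Longrightarrow> GrPq_eval G (gr_class G w) = word_val G w"
  using gr_eq_some_gr_class word_val_gr_eq unfolding GrPq_eval_def by metis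

lemma GrPq_eval_hom: "GrPq_eval G \<in> hom (GrPq G) G"
  unfolding hom_def by (auto simp: carrier_GrPq mult_GrPq_gr_class GrPq_eval_gr_class)

lemma GrPq_eval_sigma: "a \<in> carrier G \<Longrightarrow> GrPq_eval G (sigma G a) = a"
  by (simp add: sigma_def GrPq_eval_gr_class)

lemma GrPq_eval_surj: "GrPq_eval G ` carrier (GrPq G) = carrier G"
proof
  show "GrPq_eval G ` carrier (GrPq G) \<subseteq> carrier G"
    using GrPq_eval_hom by (auto simp: hom_def)
  show "carrier G \<subseteq> GrPq_eval G ` carrier (GrPq G)"
    using GrPq_eval_sigma sigma_in_carrier_GrPq by (metis image_eqI subsetI)
qed

lemma hom_GrPq_gr_class:
  assumes f: "f \<in> hom (GrPq G) G" and f_sigma: "\<And>a. a \<in> carrier G \<Longrightarrow> f (sigma G a) = a"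
    and w: "w \<in> gr_words G"
  shows "f (gr_class G w) = word_val G w"
  using w
proof (induction w)
  case Nil
  have "f (gr_class G []) = f (sigma G \<one>)"
    unfolding sigma_def using gr_class_eq[OF gr_eq.unit[of G]] by simp
  then show ?case using f_sigma by simp
next
  case (Cons x w)
  have x: "fst x \<in> carrier G" and w: "w \<in> gr_words G"
    using Cons.prems by simp_all
  have "gr_class G (x # w) = gr_class G [x] \<otimes>\<^bsub>GrPq G\<^esub> gr_class G w"
    using mult_GrPq_gr_class[of "[x]" G w] x w by simp
  also have "gr_class G [x] = sigma G (letter_val G x)"
    unfolding sigma_def using gr_eq_letter_generator[OF x] by (rule gr_class_eq)
  finally have "f (gr_class G (x # w)) = f (sigma G (letter_val G x)) \<otimes> f (gr_class G w)"
    using hom_mult[OF f sigma_in_carrier_GrPq[OF letter_val_closed] gr_class_in_carrier_GrPq[OF w]]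
    by simp
  then show ?case
    using f_sigma Cons.IH[OF w] by simp
qed

lemma kernel_subset_center_GrPq:
  assumes f: "f \<in> hom (GrPq G) G" and f_sigma: "\<And>a. a \<in> carrier G \<Longrightarrow> f (sigma G a) = a"
  shows "kernel (GrPq G) G f \<subseteq> center (GrPq G)"
proof
  fix A assume A: "A \<in> kernel (GrPq G) G f"
  then obtain w where w: "w \<in> gr_words G" and A_eq: "A = gr_class G w"
    unfolding kernel_def carrier_GrPq by blast
  have val: "word_val G w = \<one>"
    using A hom_GrPq_gr_class[OF f f_sigma w] by (simp add: kernel_def A_eq)
  have "A \<otimes>\<^bsub>GrPq G\<^esub> B = B \<otimes>\<^bsub>GrPq G\<^esub> A" if B: "B \<in> carrier (GrPq G)" for B
  proof -
    obtain v where v: "v \<in> gr_words G" and B_eq: "B = gr_class G v"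
      using B unfolding carrier_GrPq by blast
    have "A \<otimes>\<^bsub>GrPq G\<^esub> B = gr_class G (w @ v)"
      unfolding A_eq B_eq by (rule mult_GrPq_gr_class[OF w v])
    also have "\<dots> = gr_class G (v @ w)"
      using gr_eq_kernel_commute[OF w val v] by (rule gr_class_eq)
    also have "\<dots> = B \<otimes>\<^bsub>GrPq G\<^esub> A"
      unfolding A_eq B_eq by (rule mult_GrPq_gr_class[OF v w, symmetric])
    finally show ?thesis .
  qed
  then show "A \<in> center (GrPq G)"
    unfolding center_def using gr_class_in_carrier_GrPq[OF w] A_eq by blast
qed

end

theorem mainTheorem8:
  fixes G :: "('a, 'm) monoid_scheme"
  assumes "group G"
  shows "group (GrPq G)
    \<and> (\<exists>\<epsilon>. \<epsilon> \<in> hom (GrPq G) G \<and> \<epsilon> ` carrier (GrPq G) = carrier G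
           \<and> (\<forall>a \<in> carrier G. \<epsilon> (sigma G a) = a))
    \<and> (\<forall>\<epsilon> \<in> hom (GrPq G) G. (\<forall>a \<in> carrier G. \<epsilon> (sigma G a) = a)
           \<longrightarrow> kernel (GrPq G) G \<epsilon> \<subseteq> center (GrPq G))"
proof -
  interpret group G by (rule assms)
  show ?thesis
    using group_GrPq GrPq_eval_hom GrPq_eval_surj GrPq_eval_sigma kernel_subset_center_GrPq
    by blast
qed

end
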